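(* Let $A$ and $A'$ be hyperoperators on $\mathbb{R}^n$ on the complex Banach space $X$ such that $D_A\cap D_{A'}$ is dense in $X$. Assume there is a dense subspace $D\subset D_A\cap D_{A'}$ such that for each $j=1,\dots,n$, $a_j=a'_j$ on $D$ and $a_j$ maps $D$ into $D$. Then $A=A'$.
   Context: $X$ is a complex Banach space, $L(X)$ the bounded operators. $\mathcal{D}(\mathbb{R}^n)=C_c^\infty(\mathbb{R}^n)$ (complex-valued). A hyperoperator on $\mathbb{R}^n$ is a linear map $A:\mathcal{D}(\mathbb{R}^n)\to L(X)$ which is continuous ($A(\phi_j)\to0$ in operator norm when $\phi_j\to0$ in $\mathcal{D}(\mathbb{R}^n)$), multiplicative ($A(\phi\psi)=A(\phi)A(\psi)$), and such that (i) $D_A:=\bigcup_\phi\operatorname{Im}A(\phi)$ is dense and (ii) $\bigcap_\phi\operatorname{Ker}A(\phi)=\{0\}$. For smooth $f:\mathbb{R}^n\to\mathbb{R}$ and $x\in D_A$ written $x=A(\phi)y$, set $f(a)x:=A(f\phi)y$ (well defined). The associated operators are $a_j:=f_j(a)$ with $f_j(\xi)=\xi_j$, defined on $D_A$; similarly $a'_j$ for $A'$ on $D_{A'}$. *)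

theory Defs
  imports "HOL-Analysis.Analysis"
begin

class complex_banach = banach +
  fixes scaleC :: "complex \<Rightarrow> 'a \<Rightarrow> 'a" (infixr \<open>*\<^sub>C\<close> 75)
  assumes scaleC_add_right: "c *\<^sub>C (x + y) = c *\<^sub>C x + c *\<^sub>C y"
    and scaleC_add_left: "(b + c) *\<^sub>C x = b *\<^sub>C x + c *\<^sub>C x"
    and scaleC_scaleC: "b *\<^sub>C (c *\<^sub>C x) = (b * c) *\<^sub>C x"
    and scaleC_one: "1 *\<^sub>C x = x"
    and scaleR_scaleC: "r *\<^sub>R x = complex_of_real r *\<^sub>C x"
    and norm_scaleC: "norm (c *\<^sub>C x) = cmod c * norm x"

definition csubspace :: "'x::complex_banach set \<Rightarrow> bool" where
  "csubspace D \<longleftrightarrow> 0 \<in> D \<and> (\<forall>x\<in>D. \<forall>y\<in>D. x + y \<in> D) \<and> (\<forall>c. \<forall>x\<in>D. c *\<^sub>C x \<in> D)"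

coinductive smooth :: "('a::euclidean_space \<Rightarrow> 'b::real_normed_vector) \<Rightarrow> bool" where
  "(\<forall>x. f differentiable (at x)) \<Longrightarrow>
   (\<forall>i\<in>Basis. smooth (\<lambda>x. frechet_derivative f (at x) i)) \<Longrightarrow> smooth f"

definition test_fun :: "('a::euclidean_space \<Rightarrow> complex) \<Rightarrow> bool" where
  "test_fun \<phi> \<longleftrightarrow> smooth \<phi> \<and> compact (closure {x. \<phi> x \<noteq> 0})"

fun pderivs :: "'a::euclidean_space list \<Rightarrow> ('a \<Rightarrow> 'b::real_normed_vector) \<Rightarrow> 'a \<Rightarrow> 'b" where
  "pderivs [] f = f"
| "pderivs (i # is) f = (\<lambda>x. frechet_derivative (pderivs is f) (at x) i)"

definition test_tendsto0 :: "(nat \<Rightarrow> 'a::euclidean_space \<Rightarrow> complex) \<Rightarrow> bool" where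
  "test_tendsto0 \<phi>s \<longleftrightarrow> (\<forall>k. test_fun (\<phi>s k)) \<and>
     (\<exists>K. compact K \<and> (\<forall>k. {x. \<phi>s k x \<noteq> 0} \<subseteq> K)) \<and>
     (\<forall>is. set is \<subseteq> Basis \<longrightarrow>
        (\<forall>e>0. \<forall>\<^sub>F k in sequentially. \<forall>x. norm (pderivs is (\<phi>s k) x) < e))"

definition domA :: "(('a::euclidean_space \<Rightarrow> complex) \<Rightarrow> 'x::complex_banach \<Rightarrow>\<^sub>L 'x) \<Rightarrow> 'x set" where
  "domA A = (\<Union>\<phi>\<in>{\<phi>. test_fun \<phi>}. range (blinfun_apply (A \<phi>)))"

definition hyperop :: "(('a::euclidean_space \<Rightarrow> complex) \<Rightarrow> 'x::complex_banach \<Rightarrow>\<^sub>L 'x) \<Rightarrow> bool" where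
  "hyperop A \<longleftrightarrow>
     \<comment> \<open>values are bounded complex-linear operators\<close>
     (\<forall>\<phi>. test_fun \<phi> \<longrightarrow> (\<forall>c x. A \<phi> (c *\<^sub>C x) = c *\<^sub>C A \<phi> x)) \<and>
     \<comment> \<open>A is complex linear\<close>
     (\<forall>\<phi> \<psi>. test_fun \<phi> \<longrightarrow> test_fun \<psi> \<longrightarrow> A (\<lambda>t. \<phi> t + \<psi> t) = A \<phi> + A \<psi>) \<and>
     (\<forall>\<phi> c x. test_fun \<phi> \<longrightarrow> A (\<lambda>t. c * \<phi> t) x = c *\<^sub>C A \<phi> x) \<and>
     \<comment> \<open>continuous\<close>
     (\<forall>\<phi>s. test_tendsto0 \<phi>s \<longrightarrow> (\<lambda>k. norm (A (\<phi>s k))) \<longlonglongrightarrow> 0) \<and>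
     \<comment> \<open>multiplicative\<close>
     (\<forall>\<phi> \<psi>. test_fun \<phi> \<longrightarrow> test_fun \<psi> \<longrightarrow> A (\<lambda>t. \<phi> t * \<psi> t) = A \<phi> o\<^sub>L A \<psi>) \<and>
     \<comment> \<open>(i) D_A dense\<close>
     closure (domA A) = UNIV \<and>
     \<comment> \<open>(ii) common kernel trivial\<close>
     {x. \<forall>\<phi>. test_fun \<phi> \<longrightarrow> A \<phi> x = 0} = {0}"

text \<open>f(a)x := A(f phi) y where x = A(phi) y\<close>
definition fcalc :: "(('a::euclidean_space \<Rightarrow> complex) \<Rightarrow> 'x::complex_banach \<Rightarrow>\<^sub>L 'x)
    \<Rightarrow> ('a \<Rightarrow> real) \<Rightarrow> 'x \<Rightarrow> 'x" where
  "fcalc A f x = (SOME z. \<exists>\<phi> y. test_fun \<phi> \<and> x = A \<phi> y \<and>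
                      z = A (\<lambda>t. complex_of_real (f t) * \<phi> t) y)"

text \<open>The generator a_j = f_j(a), f_j(xi) = xi_j\<close>
definition coord_op :: "((real^'n \<Rightarrow> complex) \<Rightarrow> 'x::complex_banach \<Rightarrow>\<^sub>L 'x) \<Rightarrow> 'n \<Rightarrow> 'x \<Rightarrow> 'x" where
  "coord_op A j = fcalc A (\<lambda>\<xi>. \<xi> $ j)"

end

(* The smooth functions g for which g(a) and g(a') agree on D and leave D invariant form an
   algebra containing the constants and the coordinates, hence all polynomials. Convolving a test
   function phi with normalised Landau kernels (1 - |z|^2/R)^k yields polynomials p_k whose
   derivatives of every order converge to those of phi uniformly on compact sets. For
   x = A(psi) y = A'(psi') y' in D the products p_k psi and p_k psi' then converge to phi psi and
   phi psi' as test functions, so by continuity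
   A(phi) x = lim A(p_k psi) y = lim A'(p_k psi') y' = A'(phi) x.
   Both sides are continuous in x, and D is dense. *)

theory Submission
  imports Defs
begin

definition partial_deriv :: "'a::euclidean_space \<Rightarrow> ('a \<Rightarrow> 'b::real_normed_vector) \<Rightarrow> 'a \<Rightarrow> 'b" where
  "partial_deriv i f = (\<lambda>x. frechet_derivative f (at x) i)"

lemma pderivs_Cons_partial_deriv [simp]: "pderivs (i # is) f = partial_deriv i (pderivs is f)"
  by (simp add: partial_deriv_def)

declare pderivs.simps(2) [simp del]

lemma pderivs_append_partial_deriv: "pderivs (is @ [i]) f = pderivs is (partial_deriv i f)"
  by (induction "is") auto

lemma smooth_differentiable: "smooth f \<Longrightarrow> f differentiable (at x)"
  by (erule smooth.cases) auto

lemma smooth_has_derivative: "smooth f \<Longrightarrow> (f has_derivative frechet_derivative f (at x)) (at x)"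
  using frechet_derivative_works smooth_differentiable by blast

lemma smooth_continuous_on: "smooth f \<Longrightarrow> continuous_on S f"
  by (meson continuous_at_imp_continuous_on differentiable_imp_continuous_within smooth_differentiable)

lemma smooth_partial_deriv: "smooth f \<Longrightarrow> i \<in> Basis \<Longrightarrow> smooth (partial_deriv i f)"
  unfolding partial_deriv_def by (erule smooth.cases) auto

lemma smooth_pderivs: "smooth f \<Longrightarrow> set is \<subseteq> Basis \<Longrightarrow> smooth (pderivs is f)"
  by (induction "is") (auto simp: smooth_partial_deriv)

lemma smooth_const: "smooth (\<lambda>x. c)"
  by (coinduction arbitrary: c rule: smooth.coinduct) auto

lemma partial_deriv_add:
  assumes "f differentiable (at x)" "g differentiable (at x)"
  shows "partial_deriv i (\<lambda>x. f x + g x) x = partial_deriv i f x + partial_deriv i g x"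
proof -
  have "((\<lambda>x. f x + g x) has_derivative
      (\<lambda>h. frechet_derivative f (at x) h + frechet_derivative g (at x) h)) (at x)"
    using assms by (intro has_derivative_add) (auto simp: frechet_derivative_works)
  then show ?thesis
    unfolding partial_deriv_def by (metis frechet_derivative_at)
qed

lemma partial_deriv_diff:
  assumes "f differentiable (at x)" "g differentiable (at x)"
  shows "partial_deriv i (\<lambda>x. f x - g x) x = partial_deriv i f x - partial_deriv i g x"
proof -
  have "((\<lambda>x. f x - g x) has_derivative
      (\<lambda>h. frechet_derivative f (at x) h - frechet_derivative g (at x) h)) (at x)"
    using assms by (intro has_derivative_diff) (auto simp: frechet_derivative_works)
  then show ?thesis
    unfolding partial_deriv_def by (metis frechet_derivative_at)
qed

lemma partial_deriv_mult:
  fixes f g :: "'a::euclidean_space \<Rightarrow> 'b::real_normed_field"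
  assumes "f differentiable (at x)" "g differentiable (at x)"
  shows "partial_deriv i (\<lambda>x. f x * g x) x = partial_deriv i f x * g x + f x * partial_deriv i g x"
proof -
  have "((\<lambda>x. f x * g x) has_derivative
      (\<lambda>h. f x * frechet_derivative g (at x) h + frechet_derivative f (at x) h * g x)) (at x)"
    using assms by (intro has_derivative_mult) (auto simp: frechet_derivative_works)
  then show ?thesis
    unfolding partial_deriv_def by (metis (no_types, lifting) add.commute frechet_derivative_at)
qed

text \<open>Smoothness of products is proved by coinduction on finite sums of products of smooth
  functions: by the product rule this class is closed under partial derivatives.\<close>

definition sum_prods :: "(('a \<Rightarrow> 'b::real_normed_field) \<times> ('a \<Rightarrow> 'b)) list \<Rightarrow> 'a \<Rightarrow> 'b" where
  "sum_prods ls = (\<lambda>x. \<Sum>(f, g)\<leftarrow>ls. f x * g x)"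

lemma sum_prods_differentiable:
  assumes "\<forall>(f, g)\<in>set ls. f differentiable (at x) \<and> g differentiable (at x)"
  shows "sum_prods ls differentiable (at x)"
  using assms by (induction ls) (auto simp: sum_prods_def intro!: differentiable_add differentiable_mult)

definition partial_deriv_prods ::
    "'a::euclidean_space \<Rightarrow> (('a \<Rightarrow> 'b::real_normed_field) \<times> ('a \<Rightarrow> 'b)) list \<Rightarrow> (('a \<Rightarrow> 'b) \<times> ('a \<Rightarrow> 'b)) list" where
  "partial_deriv_prods i ls = concat (map (\<lambda>(f, g). [(partial_deriv i f, g), (f, partial_deriv i g)]) ls)"

lemma partial_deriv_sum_prods:
  assumes "\<forall>(f, g)\<in>set ls. smooth f \<and> smooth g"
  shows "partial_deriv i (sum_prods ls) = sum_prods (partial_deriv_prods i ls)"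
  using assms
proof (induction ls)
  case Nil
  show ?case by (simp add: sum_prods_def partial_deriv_prods_def partial_deriv_def frechet_derivative_const)
next
  case (Cons fg ls)
  obtain f g where fg: "fg = (f, g)" by fastforce
  have f: "smooth f" and g: "smooth g" using Cons.prems by (auto simp: fg)
  have "partial_deriv i (sum_prods (fg # ls)) x =
      partial_deriv i f x * g x + f x * partial_deriv i g x + partial_deriv i (sum_prods ls) x" for x
  proof -
    have "(\<lambda>x. f x * g x) differentiable (at x)"
      using f g by (intro differentiable_mult smooth_differentiable)
    moreover have "sum_prods ls differentiable (at x)"
      using Cons.prems by (intro sum_prods_differentiable) (auto simp: smooth_differentiable)
    ultimately show ?thesis
      using partial_deriv_add[of "\<lambda>x. f x * g x" x "sum_prods ls" i]
        partial_deriv_mult[OF smooth_differentiable[OF f] smooth_differentiable[OF g]]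
      by (simp add: fg sum_prods_def)
  qed
  then show ?case
    using Cons by (auto simp: fg sum_prods_def partial_deriv_prods_def)
qed

lemma smooth_sum_prods:
  assumes "\<forall>(f, g)\<in>set ls. smooth f \<and> smooth g"
  shows "smooth (sum_prods ls)"
  using assms
proof (coinduction arbitrary: ls rule: smooth.coinduct)
  case (smooth ls)
  have "\<forall>(f, g)\<in>set (partial_deriv_prods i ls). smooth f \<and> smooth g" if "i \<in> Basis" for i
    using smooth that by (auto simp: partial_deriv_prods_def smooth_partial_deriv)
  moreover have "(\<lambda>x. frechet_derivative (sum_prods ls) (at x) i) = sum_prods (partial_deriv_prods i ls)" for i
    using partial_deriv_sum_prods[OF smooth] unfolding partial_deriv_def by metis
  moreover have "sum_prods ls differentiable (at x)" for x
    using smooth by (intro sum_prods_differentiable) (auto simp: smooth_differentiable)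
  ultimately show ?case by blast
qed

lemma smooth_mult:
  fixes f g :: "'a::euclidean_space \<Rightarrow> 'b::real_normed_field"
  shows "smooth f \<Longrightarrow> smooth g \<Longrightarrow> smooth (\<lambda>x. f x * g x)"
  using smooth_sum_prods[of "[(f, g)]"] by (simp add: sum_prods_def)

lemma smooth_add:
  fixes f g :: "'a::euclidean_space \<Rightarrow> 'b::real_normed_field"
  shows "smooth f \<Longrightarrow> smooth g \<Longrightarrow> smooth (\<lambda>x. f x + g x)"
  using smooth_sum_prods[of "[(f, \<lambda>_. 1), (g, \<lambda>_. 1)]"] by (simp add: sum_prods_def smooth_const)

lemma smooth_diff:
  fixes f g :: "'a::euclidean_space \<Rightarrow> 'b::real_normed_field"
  shows "smooth f \<Longrightarrow> smooth g \<Longrightarrow> smooth (\<lambda>x. f x - g x)"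
  using smooth_sum_prods[of "[(f, \<lambda>_. 1), (g, \<lambda>_. - 1)]"] by (simp add: sum_prods_def smooth_const)

lemma smooth_of_real_vec_nth: "smooth (\<lambda>x::real^'n. complex_of_real (x $ j))"
proof -
  have d: "((\<lambda>x::real^'n. complex_of_real (x $ j)) has_derivative (\<lambda>h. complex_of_real (h $ j))) (at x)" for x
    by (intro has_derivative_of_real bounded_linear_imp_has_derivative bounded_linear_vec_nth)
  then have "partial_deriv i (\<lambda>x::real^'n. complex_of_real (x $ j)) = (\<lambda>x. complex_of_real (i $ j))" for i
    unfolding partial_deriv_def by (metis frechet_derivative_at)
  then show ?thesis
    using d by (intro smooth.intros) (auto simp: differentiable_def smooth_const partial_deriv_def[symmetric])
qed

lemma pderivs_add:
  assumes "smooth f" "smooth g" "set is \<subseteq> Basis"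
  shows "pderivs is (\<lambda>x. f x + g x) = (\<lambda>x. pderivs is f x + pderivs is g x)"
  using assms(3)
proof (induction "is")
  case (Cons i "is")
  then have "pderivs (i # is) (\<lambda>x. f x + g x) = partial_deriv i (\<lambda>x. pderivs is f x + pderivs is g x)"
    by simp
  also have "\<dots> = (\<lambda>x. partial_deriv i (pderivs is f) x + partial_deriv i (pderivs is g) x)"
    using Cons.prems assms(1,2) by (intro ext partial_deriv_add smooth_differentiable smooth_pderivs) auto
  finally show ?case by simp
qed simp

lemma pderivs_diff:
  assumes "smooth f" "smooth g" "set is \<subseteq> Basis"
  shows "pderivs is (\<lambda>x. f x - g x) = (\<lambda>x. pderivs is f x - pderivs is g x)"
  using assms(3)
proof (induction "is")
  case (Cons i "is")
  then have "pderivs (i # is) (\<lambda>x. f x - g x) = partial_deriv i (\<lambda>x. pderivs is f x - pderivs is g x)"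
    by simp
  also have "\<dots> = (\<lambda>x. partial_deriv i (pderivs is f) x - partial_deriv i (pderivs is g) x)"
    using Cons.prems assms(1,2) by (intro ext partial_deriv_diff smooth_differentiable smooth_pderivs) auto
  finally show ?case by simp
qed simp

inductive_set polynomials :: "(real^'n \<Rightarrow> complex) set" where
  polynomials_const: "(\<lambda>x. c) \<in> polynomials"
| polynomials_coord: "(\<lambda>x. complex_of_real (x $ j)) \<in> polynomials"
| polynomials_add: "p \<in> polynomials \<Longrightarrow> q \<in> polynomials \<Longrightarrow> (\<lambda>x. p x + q x) \<in> polynomials"
| polynomials_mult: "p \<in> polynomials \<Longrightarrow> q \<in> polynomials \<Longrightarrow> (\<lambda>x. p x * q x) \<in> polynomials"

lemma polynomials_smooth: "p \<in> polynomials \<Longrightarrow> smooth p"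
  by (induction rule: polynomials.induct)
    (simp_all add: smooth_const smooth_of_real_vec_nth smooth_add smooth_mult)

definition tsupport :: "('a::topological_space \<Rightarrow> 'b::zero) \<Rightarrow> 'a set" where
  "tsupport f = closure {x. f x \<noteq> 0}"

lemma not_in_tsupport: "x \<notin> tsupport f \<Longrightarrow> f x = 0"
  using closure_subset[of "{x. f x \<noteq> 0}"] unfolding tsupport_def by auto

lemma test_fun_smooth: "test_fun f \<Longrightarrow> smooth f"
  by (simp add: test_fun_def)

lemma test_fun_compact_tsupport: "test_fun f \<Longrightarrow> compact (tsupport f)"
  by (simp add: test_fun_def tsupport_def)

lemma test_fun_mult:
  fixes g \<psi> :: "'a::euclidean_space \<Rightarrow> complex"
  assumes "smooth g" "test_fun \<psi>"
  shows "test_fun (\<lambda>t. g t * \<psi> t)"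
proof -
  have "bounded {t. \<psi> t \<noteq> 0}" using assms(2) by (simp add: test_fun_def)
  then have "bounded {t. g t * \<psi> t \<noteq> 0}" by (rule bounded_subset) auto
  moreover have "smooth (\<lambda>t. g t * \<psi> t)"
    using smooth_mult[OF assms(1) test_fun_smooth[OF assms(2)]] .
  ultimately show ?thesis
    unfolding test_fun_def using compact_closure by blast
qed

context
  fixes A :: "('a::euclidean_space \<Rightarrow> complex) \<Rightarrow> 'x::complex_banach \<Rightarrow>\<^sub>L 'x"
  assumes A: "hyperop A"
begin

lemma hyperop_add: "test_fun \<phi> \<Longrightarrow> test_fun \<psi> \<Longrightarrow> A (\<lambda>t. \<phi> t + \<psi> t) = A \<phi> + A \<psi>"
  using A unfolding hyperop_def by simp

lemma hyperop_scaleC: "test_fun \<phi> \<Longrightarrow> A (\<lambda>t. c * \<phi> t) x = c *\<^sub>C A \<phi> x"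
  using A unfolding hyperop_def by simp

lemma hyperop_mult: "test_fun \<phi> \<Longrightarrow> test_fun \<psi> \<Longrightarrow> A (\<lambda>t. \<phi> t * \<psi> t) = A \<phi> o\<^sub>L A \<psi>"
  using A unfolding hyperop_def by simp

lemma hyperop_tendsto_0: "test_tendsto0 \<phi>s \<Longrightarrow> (\<lambda>k. norm (A (\<phi>s k))) \<longlonglongrightarrow> 0"
  using A unfolding hyperop_def by simp

lemma hyperop_common_kernel: "(\<And>\<phi>. test_fun \<phi> \<Longrightarrow> A \<phi> x = 0) \<Longrightarrow> x = 0"
  using A unfolding hyperop_def by blast

context
  fixes f :: "'a \<Rightarrow> real"
  assumes f_mult: "\<And>\<theta>. test_fun \<theta> \<Longrightarrow> test_fun (\<lambda>t. complex_of_real (f t) * \<theta> t)"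
begin

lemma fcalc_well_defined:
  assumes "test_fun \<rho>\<^sub>1" "test_fun \<rho>\<^sub>2" "A \<rho>\<^sub>1 w\<^sub>1 = A \<rho>\<^sub>2 w\<^sub>2"
  shows "A (\<lambda>t. complex_of_real (f t) * \<rho>\<^sub>1 t) w\<^sub>1 = A (\<lambda>t. complex_of_real (f t) * \<rho>\<^sub>2 t) w\<^sub>2"
proof -
  have swap: "A \<theta> (A (\<lambda>t. complex_of_real (f t) * \<rho> t) w) = A (\<lambda>t. complex_of_real (f t) * \<theta> t) (A \<rho> w)"
    if "test_fun \<theta>" "test_fun \<rho>" for \<theta> \<rho> w
  proof -
    have "A \<theta> (A (\<lambda>t. complex_of_real (f t) * \<rho> t) w) = A (\<lambda>t. \<theta> t * (complex_of_real (f t) * \<rho> t)) w"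
      by (simp add: hyperop_mult[OF that(1) f_mult[OF that(2)]])
    also have "\<dots> = A (\<lambda>t. (complex_of_real (f t) * \<theta> t) * \<rho> t) w"
      by (simp add: mult_ac)
    also have "\<dots> = A (\<lambda>t. complex_of_real (f t) * \<theta> t) (A \<rho> w)"
      by (simp add: hyperop_mult[OF f_mult[OF that(1)] that(2)])
    finally show ?thesis .
  qed
  have "A (\<lambda>t. complex_of_real (f t) * \<rho>\<^sub>1 t) w\<^sub>1 - A (\<lambda>t. complex_of_real (f t) * \<rho>\<^sub>2 t) w\<^sub>2 = 0"
  proof (rule hyperop_common_kernel)
    fix \<theta> :: "'a \<Rightarrow> complex" assume "test_fun \<theta>"
    then show "A \<theta> (A (\<lambda>t. complex_of_real (f t) * \<rho>\<^sub>1 t) w\<^sub>1 - A (\<lambda>t. complex_of_real (f t) * \<rho>\<^sub>2 t) w\<^sub>2) = 0"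
      using swap[of \<theta> \<rho>\<^sub>1 w\<^sub>1] swap[of \<theta> \<rho>\<^sub>2 w\<^sub>2] assms by (simp add: blinfun.diff_right)
  qed
  then show ?thesis by simp
qed

lemma fcalc_apply:
  assumes "test_fun \<rho>"
  shows "fcalc A f (A \<rho> w) = A (\<lambda>t. complex_of_real (f t) * \<rho> t) w"
  unfolding fcalc_def
proof (rule someI2)
  show "\<exists>\<phi> y. test_fun \<phi> \<and> A \<rho> w = A \<phi> y \<and>
      A (\<lambda>t. complex_of_real (f t) * \<rho> t) w = A (\<lambda>t. complex_of_real (f t) * \<phi> t) y"
    using assms by blast
next
  fix z
  assume "\<exists>\<phi> y. test_fun \<phi> \<and> A \<rho> w = A \<phi> y \<and> z = A (\<lambda>t. complex_of_real (f t) * \<phi> t) y"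
  then obtain \<phi> y where "test_fun \<phi>" "A \<rho> w = A \<phi> y" "z = A (\<lambda>t. complex_of_real (f t) * \<phi> t) y"
    by blast
  then show "z = A (\<lambda>t. complex_of_real (f t) * \<rho> t) w"
    using fcalc_well_defined[OF assms] by metis
qed

end

end

lemma coord_op_apply:
  fixes A :: "(real^'n \<Rightarrow> complex) \<Rightarrow> 'x::complex_banach \<Rightarrow>\<^sub>L 'x"
  assumes "hyperop A" "test_fun \<rho>"
  shows "coord_op A j (A \<rho> w) = A (\<lambda>t. complex_of_real (t $ j) * \<rho> t) w"
  unfolding coord_op_def
  using fcalc_apply[OF assms(1) test_fun_mult[OF smooth_of_real_vec_nth] assms(2)] .

text \<open>\<open>g(a)\<close> and \<open>g(a')\<close> agree on \<open>D\<close> and map \<open>D\<close> into itself, written out through representations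
  \<open>x = A \<psi> y = A' \<psi>' y'\<close> of the points of \<open>D\<close>.\<close>

definition intertwining ::
    "((real^'n \<Rightarrow> complex) \<Rightarrow> 'x::complex_banach \<Rightarrow>\<^sub>L 'x) \<Rightarrow> ((real^'n \<Rightarrow> complex) \<Rightarrow> 'x \<Rightarrow>\<^sub>L 'x)
      \<Rightarrow> 'x set \<Rightarrow> (real^'n \<Rightarrow> complex) \<Rightarrow> bool" where
  "intertwining A A' D g \<longleftrightarrow> smooth g \<and>
     (\<forall>\<psi> y \<psi>' y'. test_fun \<psi> \<longrightarrow> test_fun \<psi>' \<longrightarrow> A \<psi> y = A' \<psi>' y' \<longrightarrow> A \<psi> y \<in> D \<longrightarrow>
        A (\<lambda>t. g t * \<psi> t) y = A' (\<lambda>t. g t * \<psi>' t) y' \<and> A (\<lambda>t. g t * \<psi> t) y \<in> D)"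

lemma intertwiningD:
  assumes "intertwining A A' D g" "test_fun \<psi>" "test_fun \<psi>'" "A \<psi> y = A' \<psi>' y'" "A \<psi> y \<in> D"
  shows "A (\<lambda>t. g t * \<psi> t) y = A' (\<lambda>t. g t * \<psi>' t) y'" "A (\<lambda>t. g t * \<psi> t) y \<in> D"
  using assms unfolding intertwining_def by blast+

locale common_core =
  fixes A A' :: "(real^'n \<Rightarrow> complex) \<Rightarrow> 'x::complex_banach \<Rightarrow>\<^sub>L 'x"
    and D :: "'x set"
  assumes hyperop_A: "hyperop A" and hyperop_A': "hyperop A'"
    and csubspace_D: "csubspace D" and core_subset: "D \<subseteq> domA A \<inter> domA A'"
    and coord_op_agree: "\<And>j x. x \<in> D \<Longrightarrow> coord_op A j x = coord_op A' j x"
    and coord_op_invariant: "\<And>j x. x \<in> D \<Longrightarrow> coord_op A j x \<in> D"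
begin

lemma intertwining_one: "intertwining A A' D (\<lambda>t. 1)"
  unfolding intertwining_def by (auto simp: smooth_const)

lemma intertwining_coord_mult:
  assumes g: "intertwining A A' D g"
  shows "intertwining A A' D (\<lambda>t. complex_of_real (t $ j) * g t)"
  unfolding intertwining_def
proof (intro conjI allI impI)
  have sg: "smooth g" using g by (simp add: intertwining_def)
  then show "smooth (\<lambda>t. complex_of_real (t $ j) * g t)"
    by (intro smooth_mult smooth_of_real_vec_nth)
  fix \<psi> y \<psi>' y'
  assume \<psi>: "test_fun \<psi>" "test_fun \<psi>'" and eq: "A \<psi> y = A' \<psi>' y'" and inD: "A \<psi> y \<in> D"
  let ?z = "A (\<lambda>t. g t * \<psi> t) y"
  have zD: "?z \<in> D" and z: "?z = A' (\<lambda>t. g t * \<psi>' t) y'"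
    using intertwiningD[OF g \<psi> eq inD] by simp_all
  have "coord_op A j ?z = A (\<lambda>t. complex_of_real (t $ j) * g t * \<psi> t) y"
    using coord_op_apply[OF hyperop_A test_fun_mult[OF sg \<psi>(1)]] by (simp add: mult_ac)
  moreover have "coord_op A' j ?z = A' (\<lambda>t. complex_of_real (t $ j) * g t * \<psi>' t) y'"
    using coord_op_apply[OF hyperop_A' test_fun_mult[OF sg \<psi>(2)]] z by (simp add: mult_ac)
  ultimately show "A (\<lambda>t. complex_of_real (t $ j) * g t * \<psi> t) y = A' (\<lambda>t. complex_of_real (t $ j) * g t * \<psi>' t) y'"
    and "A (\<lambda>t. complex_of_real (t $ j) * g t * \<psi> t) y \<in> D"
    using coord_op_agree[OF zD, of j] coord_op_invariant[OF zD, of j] by simp_all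
qed

lemma intertwining_add:
  assumes g: "intertwining A A' D g" and h: "intertwining A A' D h"
  shows "intertwining A A' D (\<lambda>t. g t + h t)"
  unfolding intertwining_def
proof (intro conjI allI impI)
  have sg: "smooth g" "smooth h" using g h by (simp_all add: intertwining_def)
  then show "smooth (\<lambda>t. g t + h t)" by (intro smooth_add)
  fix \<psi> y \<psi>' y'
  assume \<psi>: "test_fun \<psi>" "test_fun \<psi>'" and eq: "A \<psi> y = A' \<psi>' y'" and inD: "A \<psi> y \<in> D"
  have "A (\<lambda>t. (g t + h t) * \<psi> t) y = A (\<lambda>t. g t * \<psi> t) y + A (\<lambda>t. h t * \<psi> t) y"
    using hyperop_add[OF hyperop_A test_fun_mult[OF sg(1) \<psi>(1)] test_fun_mult[OF sg(2) \<psi>(1)]]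
    by (simp add: distrib_right plus_blinfun.rep_eq)
  moreover have "A' (\<lambda>t. (g t + h t) * \<psi>' t) y' = A' (\<lambda>t. g t * \<psi>' t) y' + A' (\<lambda>t. h t * \<psi>' t) y'"
    using hyperop_add[OF hyperop_A' test_fun_mult[OF sg(1) \<psi>(2)] test_fun_mult[OF sg(2) \<psi>(2)]]
    by (simp add: distrib_right plus_blinfun.rep_eq)
  ultimately show "A (\<lambda>t. (g t + h t) * \<psi> t) y = A' (\<lambda>t. (g t + h t) * \<psi>' t) y'"
    and "A (\<lambda>t. (g t + h t) * \<psi> t) y \<in> D"
    using intertwiningD[OF g \<psi> eq inD] intertwiningD[OF h \<psi> eq inD] csubspace_D
    by (simp_all add: csubspace_def)
qed

lemma intertwining_cmult:
  assumes g: "intertwining A A' D g"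
  shows "intertwining A A' D (\<lambda>t. c * g t)"
  unfolding intertwining_def
proof (intro conjI allI impI)
  have sg: "smooth g" using g by (simp add: intertwining_def)
  then show "smooth (\<lambda>t. c * g t)" by (intro smooth_mult smooth_const)
  fix \<psi> y \<psi>' y'
  assume \<psi>: "test_fun \<psi>" "test_fun \<psi>'" and eq: "A \<psi> y = A' \<psi>' y'" and inD: "A \<psi> y \<in> D"
  have "A (\<lambda>t. c * g t * \<psi> t) y = c *\<^sub>C A (\<lambda>t. g t * \<psi> t) y"
    using hyperop_scaleC[OF hyperop_A test_fun_mult[OF sg \<psi>(1)]] by (simp add: mult.assoc)
  moreover have "A' (\<lambda>t. c * g t * \<psi>' t) y' = c *\<^sub>C A' (\<lambda>t. g t * \<psi>' t) y'"
    using hyperop_scaleC[OF hyperop_A' test_fun_mult[OF sg \<psi>(2)]] by (simp add: mult.assoc)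
  ultimately show "A (\<lambda>t. c * g t * \<psi> t) y = A' (\<lambda>t. c * g t * \<psi>' t) y'"
    and "A (\<lambda>t. c * g t * \<psi> t) y \<in> D"
    using intertwiningD[OF g \<psi> eq inD] csubspace_D by (simp_all add: csubspace_def)
qed

lemma polynomial_mult_intertwining:
  "p \<in> polynomials \<Longrightarrow> intertwining A A' D g \<Longrightarrow> intertwining A A' D (\<lambda>t. p t * g t)"
proof (induction p arbitrary: g rule: polynomials.induct)
  case (polynomials_add p q)
  then show ?case
    using intertwining_add by (simp add: distrib_right)
next
  case (polynomials_mult p q)
  then show ?case by (simp add: mult.assoc)
qed (simp_all add: intertwining_cmult intertwining_coord_mult)

lemma polynomial_intertwining: "p \<in> polynomials \<Longrightarrow> intertwining A A' D p"
  using polynomial_mult_intertwining[OF _ intertwining_one] by simp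

end

lemma pderivs_local:
  assumes "open U" "x \<in> U" "\<And>y. y \<in> U \<Longrightarrow> f y = g y"
  shows "pderivs is f x = pderivs is g x"
  using assms(2)
proof (induction "is" arbitrary: x)
  case (Cons i "is")
  have "(pderivs is f has_derivative d) (at x) \<longleftrightarrow> (pderivs is g has_derivative d) (at x)" for d
    using Cons by (intro iffI) (auto elim!: has_derivative_transform_within_open[OF _ assms(1)])
  then show ?case
    by (simp add: partial_deriv_def frechet_derivative_def)
qed (use assms(3) in simp)

lemma pderivs_zero: "pderivs is (\<lambda>_. 0) = (\<lambda>_. 0)"
  by (induction "is") (simp_all add: partial_deriv_def frechet_derivative_const)

lemma pderivs_eq_0_outside_tsupport:
  assumes "x \<notin> tsupport f"
  shows "pderivs is f x = 0"
proof -
  have "pderivs is f x = pderivs is (\<lambda>_. 0) x"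
    using assms not_in_tsupport by (intro pderivs_local[of "- tsupport f"]) (auto simp: tsupport_def)
  then show ?thesis by (simp add: pderivs_zero)
qed

lemma tsupport_partial_deriv_subset: "tsupport (partial_deriv i f) \<subseteq> tsupport f"
  unfolding tsupport_def
  by (rule closure_minimal) (use pderivs_eq_0_outside_tsupport[of _ f "[i]"] in \<open>auto simp: tsupport_def\<close>)

lemma uniform_limit_mult_tsupport:
  fixes f :: "nat \<Rightarrow> 'a::euclidean_space \<Rightarrow> complex"
  assumes K: "compact K" and lim: "uniform_limit K f g sequentially"
    and g: "continuous_on K g" and \<psi>: "continuous_on K \<psi>" "tsupport \<psi> \<subseteq> K"
  shows "uniform_limit UNIV (\<lambda>k x. f k x * \<psi> x) (\<lambda>x. g x * \<psi> x) sequentially"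
proof -
  have "uniform_limit K (\<lambda>k x. f k x * \<psi> x) (\<lambda>x. g x * \<psi> x) sequentially"
    using compact_continuous_image[OF g K] compact_continuous_image[OF \<psi>(1) K]
    by (intro uniform_lim_mult lim uniform_limit_const compact_imp_bounded)
  moreover have "uniform_limit (- K) (\<lambda>k x. f k x * \<psi> x) (\<lambda>x. g x * \<psi> x) sequentially"
  proof (rule uniform_limitI)
    fix e :: real assume "0 < e"
    moreover have "\<And>x. x \<notin> K \<Longrightarrow> \<psi> x = 0"
      using \<psi>(2) not_in_tsupport by blast
    ultimately show "\<forall>\<^sub>F k in sequentially. \<forall>x\<in>- K. dist (f k x * \<psi> x) (g x * \<psi> x) < e"
      by simp
  qed
  ultimately show ?thesis
    using uniform_limit_on_Un by fastforce
qed

lemma uniform_limit_pderivs_mult: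
  fixes f :: "nat \<Rightarrow> 'a::euclidean_space \<Rightarrow> complex"
  assumes "compact K" "set is \<subseteq> Basis" "\<And>k. smooth (f k)" "smooth g"
    and "\<And>js. set js \<subseteq> Basis \<Longrightarrow> uniform_limit K (\<lambda>k. pderivs js (f k)) (pderivs js g) sequentially"
    and "smooth \<psi>" "tsupport \<psi> \<subseteq> K"
  shows "uniform_limit UNIV (\<lambda>k. pderivs is (\<lambda>x. f k x * \<psi> x)) (pderivs is (\<lambda>x. g x * \<psi> x)) sequentially"
  using assms(2-)
proof (induction "is" arbitrary: f g \<psi> rule: rev_induct)
  case Nil
  have "uniform_limit K f g sequentially"
    using Nil.prems(4)[of "[]"] by simp
  with Nil.prems show ?case
    using uniform_limit_mult_tsupport[OF assms(1)] by (simp add: smooth_continuous_on)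
next
  case (snoc i "is")
  have i: "i \<in> Basis" and "is": "set is \<subseteq> Basis" using snoc.prems(1) by auto
  have product_rule: "pderivs (is @ [i]) (\<lambda>x. h x * \<psi> x) =
      (\<lambda>x. pderivs is (\<lambda>x. partial_deriv i h x * \<psi> x) x + pderivs is (\<lambda>x. h x * partial_deriv i \<psi> x) x)"
    if "smooth h" for h
  proof -
    have "partial_deriv i (\<lambda>x. h x * \<psi> x) = (\<lambda>x. partial_deriv i h x * \<psi> x + h x * partial_deriv i \<psi> x)"
      using that snoc.prems(5) by (simp add: fun_eq_iff partial_deriv_mult smooth_differentiable)
    then show ?thesis
      using i "is" that snoc.prems(5)
      by (simp add: pderivs_append_partial_deriv pderivs_add smooth_mult smooth_partial_deriv)
  qed
  have "uniform_limit UNIV (\<lambda>k. pderivs is (\<lambda>x. partial_deriv i (f k) x * \<psi> x))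
      (pderivs is (\<lambda>x. partial_deriv i g x * \<psi> x)) sequentially"
    using snoc i "is" by (intro snoc.IH) (auto simp: smooth_partial_deriv pderivs_append_partial_deriv[symmetric])
  moreover have "uniform_limit UNIV (\<lambda>k. pderivs is (\<lambda>x. f k x * partial_deriv i \<psi> x))
      (pderivs is (\<lambda>x. g x * partial_deriv i \<psi> x)) sequentially"
    using snoc i "is" tsupport_partial_deriv_subset[of i \<psi>]
    by (intro snoc.IH) (auto simp: smooth_partial_deriv)
  ultimately show ?case
    using snoc.prems(2,3) by (simp add: product_rule uniform_limit_add)
qed

section \<open>Convolution\<close>

definition convolution_on :: "'a::euclidean_space set \<Rightarrow> ('a \<Rightarrow> real) \<Rightarrow> ('a \<Rightarrow> complex) \<Rightarrow> 'a \<Rightarrow> complex" where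
  "convolution_on C L f x = integral C (\<lambda>z. complex_of_real (L z) * f (x - z))"

lemma has_derivative_convolution_on:
  fixes L :: "'a::euclidean_space \<Rightarrow> real"
  assumes L: "continuous_on UNIV L" and f: "smooth f"
  shows "(convolution_on (cbox a b) L f has_derivative
     (\<lambda>h. integral (cbox a b) (\<lambda>z. complex_of_real (L z) * frechet_derivative f (at (x - z)) h))) (at x)"
proof -
  define f' where "f' x t = L t *\<^sub>R Blinfun (frechet_derivative f (at (x - t)))" for x t
  have "bounded_linear (frechet_derivative f (at y))" for y
    using f smooth_has_derivative has_derivative_bounded_linear by blast
  then have f'_apply: "f' x t h = complex_of_real (L t) * frechet_derivative f (at (x - t)) h" for x t h
    by (simp add: f'_def scaleR_blinfun.rep_eq bounded_linear_Blinfun_apply scaleR_conv_of_real)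
  have "((\<lambda>x. complex_of_real (L t) * f (x - t)) has_derivative f' x t) (at x within UNIV)" for x t
  proof -
    have "((\<lambda>x. f (x - t)) has_derivative frechet_derivative f (at (x - t))) (at x)"
      using has_derivative_compose[OF _ smooth_has_derivative[OF f], of "\<lambda>x. x - t"]
      by (simp add: has_derivative_diff[OF has_derivative_ident has_derivative_const, simplified])
    then show ?thesis
      unfolding f'_apply[abs_def] by (auto intro: has_derivative_mult_right)
  qed
  moreover have "(\<lambda>t. complex_of_real (L t) * f (x - t)) integrable_on cbox a b" for x
    by (intro integrable_continuous continuous_intros continuous_on_subset[OF L]
        continuous_on_compose2[OF smooth_continuous_on[OF f]]) auto
  moreover have cont: "continuous_on (UNIV \<times> cbox a b) (\<lambda>(x, t). f' x t)"
  proof (rule continuous_on_blinfun_componentwise)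
    fix i :: 'a assume "i \<in> Basis"
    then have "continuous_on (UNIV \<times> cbox a b) (\<lambda>p. complex_of_real (L (snd p)) * partial_deriv i f (fst p - snd p))"
      by (intro continuous_intros continuous_on_compose2[OF L]
          continuous_on_compose2[OF smooth_continuous_on[OF smooth_partial_deriv[OF f]]]) auto
    then show "continuous_on (UNIV \<times> cbox a b) (\<lambda>p. blinfun_apply (case p of (x, t) \<Rightarrow> f' x t) i)"
      by (simp add: split_beta f'_apply partial_deriv_def)
  qed
  ultimately have "(convolution_on (cbox a b) L f has_derivative integral (cbox a b) (f' x)) (at x within UNIV)"
    unfolding convolution_on_def[abs_def] by (intro leibniz_rule) auto
  moreover have "continuous_on (cbox a b) (\<lambda>t. (\<lambda>(x, t). f' x t) (x, t))"
    by (rule continuous_on_compose2[OF cont]) (auto intro!: continuous_intros)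
  then have "blinfun_apply (integral (cbox a b) (f' x)) =
      (\<lambda>h. integral (cbox a b) (\<lambda>z. complex_of_real (L z) * frechet_derivative f (at (x - z)) h))"
    by (simp add: fun_eq_iff blinfun_apply_integral integrable_continuous f'_apply)
  ultimately show ?thesis
    by simp
qed

lemma pderivs_convolution_on:
  fixes L :: "'a::euclidean_space \<Rightarrow> real"
  assumes L: "continuous_on UNIV L" and f: "smooth f" and "set is \<subseteq> Basis"
  shows "pderivs is (convolution_on (cbox a b) L f) = convolution_on (cbox a b) L (pderivs is f)"
  using assms(3)
proof (induction "is")
  case (Cons i "is")
  have "partial_deriv i (convolution_on (cbox a b) L g) = convolution_on (cbox a b) L (partial_deriv i g)"
    if "smooth g" for g
  proof
    fix x
    show "partial_deriv i (convolution_on (cbox a b) L g) x = convolution_on (cbox a b) L (partial_deriv i g) x"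
      using frechet_derivative_at[OF has_derivative_convolution_on[OF L that, of a b x], symmetric]
      by (simp add: partial_deriv_def convolution_on_def)
  qed
  then show ?case
    using Cons f by (simp add: smooth_pderivs)
qed simp

lemma convolution_on_reflect:
  fixes \<phi> :: "'a::euclidean_space \<Rightarrow> complex" and L :: "'a \<Rightarrow> real"
  assumes \<phi>: "continuous_on UNIV \<phi>" "\<And>y. y \<notin> cbox a b \<Longrightarrow> \<phi> y = 0"
    and L: "continuous_on UNIV L"
    and sub: "\<And>y. y \<in> cbox a b \<Longrightarrow> x - y \<in> cbox a' b'"
  shows "convolution_on (cbox a' b') L \<phi> x = integral (cbox a b) (\<lambda>y. complex_of_real (L (x - y)) * \<phi> y)"
proof -
  define F where "F y = complex_of_real (L (x - y)) * \<phi> y" for y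
  have "(F has_integral integral (cbox a b) F) (cbox a b)"
    unfolding F_def using \<phi>(1) L
    by (intro integrable_integral integrable_continuous continuous_intros continuous_on_compose2[OF L])
      (auto intro: continuous_on_subset)
  from has_integral_affinity[OF this, of "-1" x]
  have "((\<lambda>z. complex_of_real (L z) * \<phi> (x - z)) has_integral integral (cbox a b) F) ((\<lambda>y. x - y) ` cbox a b)"
    by (simp add: F_def algebra_simps)
  then have "((\<lambda>z. complex_of_real (L z) * \<phi> (x - z)) has_integral integral (cbox a b) F) (cbox a' b')"
  proof (rule has_integral_on_superset)
    fix z assume "z \<notin> (\<lambda>y. x - y) ` cbox a b"
    moreover have "x - z \<in> cbox a b \<Longrightarrow> z \<in> (\<lambda>y. x - y) ` cbox a b"
      by (rule image_eqI[where x="x - z"]) simp_all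
    ultimately show "complex_of_real (L z) * \<phi> (x - z) = 0"
      using \<phi>(2) by auto
  qed (use sub in auto)
  then show ?thesis
    unfolding convolution_on_def F_def by (rule integral_unique)
qed

text \<open>The Landau kernel \<open>(1 - \<bar>x - y\<bar>\<^sup>2 / R)\<^sup>k\<close> is separable, which is why convolving with it
  produces polynomials.\<close>

definition sep_kernel :: "((real^'n \<Rightarrow> complex) \<times> (real^'n \<Rightarrow> complex)) list \<Rightarrow> real^'n \<Rightarrow> real^'n \<Rightarrow> complex" where
  "sep_kernel ls x y = (\<Sum>(p, q)\<leftarrow>ls. p x * q y)"

definition separable_kernels :: "(real^'n \<Rightarrow> real^'n \<Rightarrow> complex) set" where
  "separable_kernels = {sep_kernel ls | ls. \<forall>(p, q)\<in>set ls. p \<in> polynomials \<and> continuous_on UNIV q}"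

lemma separable_kernelsI:
  "\<forall>(p, q)\<in>set ls. p \<in> polynomials \<and> continuous_on UNIV q \<Longrightarrow> sep_kernel ls \<in> separable_kernels"
  unfolding separable_kernels_def by auto

lemma separable_kernelsE:
  assumes "S \<in> separable_kernels"
  obtains ls where "\<forall>(p, q)\<in>set ls. p \<in> polynomials \<and> continuous_on UNIV q" "S = sep_kernel ls"
  using assms unfolding separable_kernels_def by blast

lemma separable_kernels_prod:
  assumes "p \<in> polynomials" "continuous_on UNIV q"
  shows "(\<lambda>x y. p x * q y) \<in> separable_kernels"
proof -
  have "(\<lambda>x y. p x * q y) = sep_kernel [(p, q)]"
    by (simp add: fun_eq_iff sep_kernel_def)
  then show ?thesis
    using assms separable_kernelsI[of "[(p, q)]"] by simp
qed

lemma separable_kernels_const: "(\<lambda>x y. c) \<in> separable_kernels"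
  using separable_kernels_prod[OF polynomials_const continuous_on_const, of c 1] by simp

lemma separable_kernels_fst_coord: "(\<lambda>x y. complex_of_real (x $ j)) \<in> separable_kernels"
  using separable_kernels_prod[OF polynomials_coord continuous_on_const, of j 1] by simp

lemma separable_kernels_snd_coord: "(\<lambda>x y. complex_of_real (y $ j)) \<in> separable_kernels"
  using separable_kernels_prod[OF polynomials_const, of "\<lambda>y. complex_of_real (y $ j)" 1]
  by (simp add: continuous_on_of_real continuous_on_component)

lemma separable_kernels_add:
  assumes "S \<in> separable_kernels" "T \<in> separable_kernels"
  shows "(\<lambda>x y. S x y + T x y) \<in> separable_kernels"
proof -
  obtain ls ms where "\<forall>(p, q)\<in>set ls. p \<in> polynomials \<and> continuous_on UNIV q" "S = sep_kernel ls"
    and "\<forall>(p, q)\<in>set ms. p \<in> polynomials \<and> continuous_on UNIV q" "T = sep_kernel ms"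
    using assms by (auto elim!: separable_kernelsE)
  moreover have "sep_kernel (ls @ ms) = (\<lambda>x y. sep_kernel ls x y + sep_kernel ms x y)"
    by (simp add: fun_eq_iff sep_kernel_def)
  ultimately show ?thesis
    using separable_kernelsI[of "ls @ ms"] by auto
qed

lemma sum_list_mult_sum_list:
  fixes f g :: "_ \<Rightarrow> 'a::semiring_0"
  shows "(\<Sum>a\<leftarrow>xs. f a) * (\<Sum>b\<leftarrow>ys. g b) = (\<Sum>a\<leftarrow>xs. \<Sum>b\<leftarrow>ys. f a * g b)"
  by (induction xs) (simp_all add: distrib_right sum_list_const_mult)

lemma separable_kernels_mult:
  assumes "S \<in> separable_kernels" "T \<in> separable_kernels"
  shows "(\<lambda>x y. S x y * T x y) \<in> separable_kernels"
proof -
  obtain ls where ls: "\<forall>(p, q)\<in>set ls. p \<in> polynomials \<and> continuous_on UNIV q" "S = sep_kernel ls"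
    using assms(1) by (rule separable_kernelsE)
  obtain ms where ms: "\<forall>(p, q)\<in>set ms. p \<in> polynomials \<and> continuous_on UNIV q" "T = sep_kernel ms"
    using assms(2) by (rule separable_kernelsE)
  define ns where "ns = concat (map (\<lambda>(p, q). map (\<lambda>(p', q'). (\<lambda>x. p x * p' x, \<lambda>y. q y * q' y)) ms) ls)"
  have "sep_kernel ns x y = S x y * T x y" for x y
  proof -
    have "sep_kernel ns x y = (\<Sum>(p, q)\<leftarrow>ls. \<Sum>(p', q')\<leftarrow>ms. p x * q y * (p' x * q' y))"
      unfolding ns_def sep_kernel_def by (induction ls) (simp_all add: case_prod_beta o_def mult_ac)
    also have "\<dots> = S x y * T x y"
      by (simp add: ls(2) ms(2) sep_kernel_def sum_list_mult_sum_list case_prod_unfold)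
    finally show ?thesis .
  qed
  then have "(\<lambda>x y. S x y * T x y) = sep_kernel ns"
    by (intro ext) simp
  moreover have "\<forall>(p, q)\<in>set ns. p \<in> polynomials \<and> continuous_on UNIV q"
    using ls(1) ms(1) unfolding ns_def by (auto intro!: polynomials_mult continuous_on_mult)
  ultimately show ?thesis
    using separable_kernelsI[of ns] by simp
qed

lemma separable_kernels_power: "S \<in> separable_kernels \<Longrightarrow> (\<lambda>x y. S x y ^ k) \<in> separable_kernels"
  by (induction k) (simp_all add: separable_kernels_const separable_kernels_mult)

lemma separable_kernels_sum:
  "finite A \<Longrightarrow> (\<And>j. j \<in> A \<Longrightarrow> F j \<in> separable_kernels) \<Longrightarrow> (\<lambda>x y. \<Sum>j\<in>A. F j x y) \<in> separable_kernels"
  by (induction A rule: finite_induct) (simp_all add: separable_kernels_const separable_kernels_add)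

lemma has_integral_sep_kernel:
  assumes "\<forall>(p, q)\<in>set ls. continuous_on UNIV q" "continuous_on UNIV \<phi>"
  shows "((\<lambda>y. sep_kernel ls x y * \<phi> y) has_integral
    (\<Sum>(p, q)\<leftarrow>ls. p x * integral (cbox a b) (\<lambda>y. q y * \<phi> y))) (cbox a b)"
  using assms(1)
proof (induction ls)
  case Nil
  then show ?case by (simp add: sep_kernel_def)
next
  case (Cons pq ls)
  obtain p q where pq: "pq = (p, q)" by fastforce
  have "continuous_on UNIV (\<lambda>y. q y * \<phi> y)"
    using Cons.prems assms(2) by (auto simp: pq intro!: continuous_intros)
  then have "(\<lambda>y. q y * \<phi> y) integrable_on cbox a b"
    using continuous_on_subset[OF _ subset_UNIV] by (blast intro: integrable_continuous)
  then have "((\<lambda>y. p x * (q y * \<phi> y)) has_integral p x * integral (cbox a b) (\<lambda>y. q y * \<phi> y)) (cbox a b)"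
    by (intro has_integral_mult_right integrable_integral)
  moreover have "((\<lambda>y. sep_kernel ls x y * \<phi> y) has_integral
      (\<Sum>(p, q)\<leftarrow>ls. p x * integral (cbox a b) (\<lambda>y. q y * \<phi> y))) (cbox a b)"
    using Cons by simp
  ultimately show ?case
    unfolding pq by (simp add: sep_kernel_def distrib_right mult.assoc has_integral_add)
qed

lemma integral_separable_kernel_polynomial:
  fixes \<phi> :: "real^'n \<Rightarrow> complex"
  assumes "S \<in> separable_kernels" "continuous_on UNIV \<phi>"
  shows "(\<lambda>x. integral (cbox a b) (\<lambda>y. S x y * \<phi> y)) \<in> polynomials"
proof -
  obtain ls where ls: "\<forall>(p, q)\<in>set ls. p \<in> polynomials \<and> continuous_on UNIV q" "S = sep_kernel ls"
    using assms(1) by (rule separable_kernelsE)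
  define c where "c q = integral (cbox a b) (\<lambda>y. q y * \<phi> y)" for q :: "real^'n \<Rightarrow> complex"
  have "integral (cbox a b) (\<lambda>y. S x y * \<phi> y) = (\<Sum>(p, q)\<leftarrow>ls. p x * c q)" for x
    unfolding ls(2) c_def using ls(1) by (intro integral_unique has_integral_sep_kernel assms(2)) auto
  moreover have "(\<lambda>x. \<Sum>(p, q)\<leftarrow>ls. p x * c q) \<in> polynomials"
    using ls(1)
  proof (induction ls)
    case Nil
    then show ?case using polynomials_const[of 0] by simp
  next
    case (Cons pq ls)
    obtain p q where pq: "pq = (p, q)" by fastforce
    have "p \<in> polynomials" "(\<lambda>x. \<Sum>(p, q)\<leftarrow>ls. p x * c q) \<in> polynomials"
      using Cons by (simp_all add: pq)
    then show ?case
      using polynomials_add[OF polynomials_mult[OF _ polynomials_const]] by (simp add: pq)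
  qed
  ultimately show ?thesis
    by simp
qed

lemma norm_vec_power2: "norm (z :: real^'n) ^ 2 = (\<Sum>j\<in>UNIV. (z $ j) ^ 2)"
  by (subst power2_norm_eq_inner) (simp add: inner_vec_def power2_eq_square)

lemma landau_kernel_separable:
  "(\<lambda>x y. complex_of_real (c * (1 - norm (x - y) ^ 2 / R) ^ k)) \<in> (separable_kernels :: (real^'n \<Rightarrow> _) set)"
proof -
  have "(\<lambda>x y::real^'n. complex_of_real c * (1 + complex_of_real (- 1 / R) *
      (\<Sum>j\<in>UNIV. (complex_of_real (x $ j) + (- 1) * complex_of_real (y $ j)) ^ 2)) ^ k) \<in> separable_kernels"
    by (intro separable_kernels_mult separable_kernels_const separable_kernels_power separable_kernels_add
        separable_kernels_sum separable_kernels_fst_coord separable_kernels_snd_coord) auto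
  then show ?thesis
    by (simp add: norm_vec_power2 diff_divide_distrib)
qed

definition cube :: "real \<Rightarrow> (real^'n) set" where
  "cube r = cbox (- (\<chi> j. r)) (\<chi> j. r)"

lemma mem_cube: "z \<in> cube r \<longleftrightarrow> (\<forall>j. \<bar>z $ j\<bar> \<le> r)"
  unfolding cube_def mem_box_cart by (auto simp: abs_le_iff) (metis minus_le_iff)+

lemma diff_mem_cube: "x \<in> cube r \<Longrightarrow> z \<in> cube s \<Longrightarrow> x - z \<in> cube (r + s)"
  unfolding mem_cube using abs_triangle_ineq4 add_mono order_trans by (metis vector_minus_component)

lemma power2_norm_le_cube: "z \<in> cube s \<Longrightarrow> norm z ^ 2 \<le> real CARD('n) * s^2" for z :: "real^'n"
proof -
  assume z: "z \<in> cube s"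
  have "norm z ^ 2 = (\<Sum>j\<in>UNIV. (z $ j)^2)" by (rule norm_vec_power2)
  also have "\<dots> \<le> (\<Sum>j\<in>(UNIV::'n set). s^2)"
  proof (rule sum_mono)
    fix j
    have "\<bar>z $ j\<bar> \<le> s" using z mem_cube by blast
    then have "\<bar>z $ j\<bar>^2 \<le> s^2" by (meson abs_ge_zero order_trans power_mono)
    then show "(z $ j)^2 \<le> s^2" by simp
  qed
  finally show ?thesis by simp
qed

lemma content_cube: "0 \<le> t \<Longrightarrow> Henstock_Kurzweil_Integration.content (cube t :: (real^'n) set) = (2*t) ^ CARD('n)"
  using content_cbox_cart[of "- (\<chi> j. t)" "(\<chi> j. t) :: real^'n"] mem_cube[of 0 t]
  unfolding cube_def by (auto simp: cube_def)

lemma convolution_on_minus_eq_integral: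
  fixes L :: "'a::euclidean_space \<Rightarrow> real"
  assumes "continuous_on UNIV L" "continuous_on UNIV h" "integral (cbox a b) L = 1"
  shows "convolution_on (cbox a b) L h x - h x =
    integral (cbox a b) (\<lambda>z. complex_of_real (L z) * (h (x - z) - h x))"
proof -
  have "L integrable_on cbox a b"
    by (rule integrable_continuous) (rule continuous_on_subset[OF assms(1) subset_UNIV])
  then have "(L has_integral 1) (cbox a b)"
    using integrable_integral assms(3) by fastforce
  from has_integral_of_real[OF this]
  have L1: "((\<lambda>z. complex_of_real (L z)) has_integral 1) (cbox a b)"
    by simp
  have const: "((\<lambda>z. complex_of_real (L z) * h x) has_integral h x) (cbox a b)"
    using has_integral_mult_left[OF L1] by simp
  have "(\<lambda>z. complex_of_real (L z) * h (x - z)) integrable_on cbox a b"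
    by (intro integrable_continuous continuous_intros continuous_on_subset[OF assms(1)]
        continuous_on_compose2[OF assms(2)]) auto
  from integral_diff[OF this has_integral_integrable[OF const]]
  show ?thesis
    by (simp add: convolution_on_def right_diff_distrib integral_unique[OF L1])
qed

lemma norm_convolution_on_minus_le:
  fixes L :: "'a::euclidean_space \<Rightarrow> real" and h :: "'a \<Rightarrow> complex"
  assumes L: "continuous_on UNIV L" "\<And>z. z \<in> cbox a b \<Longrightarrow> 0 \<le> L z" "integral (cbox a b) L = 1"
    and h: "continuous_on UNIV h"
    and near: "\<And>z. z \<in> cbox a b \<Longrightarrow> norm z < \<delta> \<Longrightarrow> norm (h (x - z) - h x) \<le> \<epsilon>"
    and far: "\<And>z. z \<in> cbox a b \<Longrightarrow> \<delta> \<le> norm z \<Longrightarrow> L z \<le> \<eta> \<and> norm (h (x - z) - h x) \<le> B"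
    and "0 \<le> \<epsilon>" "0 \<le> \<eta>" "0 \<le> B"
  shows "norm (convolution_on (cbox a b) L h x - h x) \<le> \<epsilon> + \<eta> * B * Henstock_Kurzweil_Integration.content (cbox a b)"
proof -
  have bound: "norm (complex_of_real (L z) * (h (x - z) - h x)) \<le> \<epsilon> * L z + \<eta> * B"
    if z: "z \<in> cbox a b" for z
  proof (cases "norm z < \<delta>")
    case True
    then have "L z * norm (h (x - z) - h x) \<le> L z * \<epsilon>"
      using near[OF z] L(2)[OF z] by (intro mult_left_mono)
    then show ?thesis
      using L(2)[OF z] assms(7-) by (simp add: norm_mult mult.commute add_increasing2)
  next
    case False
    then have "L z * norm (h (x - z) - h x) \<le> \<eta> * B"
      using far[OF z] L(2)[OF z] assms(8) by (intro mult_mono) auto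
    then show ?thesis
      using L(2)[OF z] assms(7-) by (simp add: norm_mult add_increasing)
  qed
  have int_L: "(\<lambda>z. \<epsilon> * L z) integrable_on cbox a b"
    by (intro integrable_continuous continuous_intros continuous_on_subset[OF L(1)]) auto
  have int_diff: "(\<lambda>z. complex_of_real (L z) * (h (x - z) - h x)) integrable_on cbox a b"
    by (intro integrable_continuous continuous_intros continuous_on_subset[OF L(1)]
        continuous_on_compose2[OF h]) auto
  have "norm (convolution_on (cbox a b) L h x - h x) \<le> integral (cbox a b) (\<lambda>z. \<epsilon> * L z + \<eta> * B)"
    unfolding convolution_on_minus_eq_integral[OF L(1) h L(3)]
    by (rule integral_norm_bound_integral[OF int_diff integrable_add[OF int_L integrable_const] bound])
  also have "\<dots> = \<epsilon> + \<eta> * B * Henstock_Kurzweil_Integration.content (cbox a b)"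
    using L(3) by (simp add: integral_add[OF int_L integrable_const])
  finally show ?thesis .
qed

lemma norm_convolution_on_cube_minus_le:
  fixes h :: "real^'n \<Rightarrow> complex" and L :: "real^'n \<Rightarrow> real"
  assumes L: "continuous_on UNIV L" "\<And>z. z \<in> cube (2*r) \<Longrightarrow> 0 \<le> L z" "integral (cube (2*r)) L = 1"
    and h: "continuous_on UNIV h" and x: "x \<in> cube r"
    and near: "\<And>u v. u \<in> cube (3*r) \<Longrightarrow> v \<in> cube (3*r) \<Longrightarrow> dist v u < \<delta> \<Longrightarrow> dist (h v) (h u) < \<epsilon>"
    and bounded: "\<And>u. u \<in> cube (3*r) \<Longrightarrow> norm (h u) \<le> M"
    and far: "\<And>z. z \<in> cube (2*r) \<Longrightarrow> \<delta> \<le> norm z \<Longrightarrow> L z \<le> \<eta>"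
    and "0 \<le> \<epsilon>" "0 \<le> \<eta>"
  shows "norm (convolution_on (cube (2*r)) L h x - h x) \<le>
    \<epsilon> + \<eta> * (2 * M) * Henstock_Kurzweil_Integration.content (cube (2*r) :: (real^'n) set)"
proof -
  have xz: "x - z \<in> cube (3*r)" if "z \<in> cube (2*r)" for z
    using diff_mem_cube[OF x that] by simp
  have "0 \<le> r"
    using x unfolding mem_cube by (meson abs_ge_zero order_trans)
  then have x3: "x \<in> cube (3*r)"
    using xz[of 0] by (simp add: mem_cube)
  then have M: "0 \<le> M"
    using bounded norm_ge_zero order_trans by blast
  show ?thesis
    unfolding cube_def
  proof (intro norm_convolution_on_minus_le[OF L(1) L(2,3)[unfolded cube_def] h])
    fix z :: "real^'n" assume z: "z \<in> cbox (- (\<chi> j. 2 * r)) (\<chi> j. 2 * r)"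
    then have xz': "x - z \<in> cube (3*r)"
      using xz by (simp add: cube_def)
    show "norm (h (x - z) - h x) \<le> \<epsilon>" if "norm z < \<delta>"
      using near[OF x3 xz'] that by (simp add: dist_norm)
    show "L z \<le> \<eta> \<and> norm (h (x - z) - h x) \<le> 2 * M" if "\<delta> \<le> norm z"
      using far[of z] z that bounded[OF x3] bounded[OF xz'] norm_triangle_ineq4[of "h (x - z)" "h x"]
      by (simp add: cube_def)
  qed (use assms(9,10) M in auto)
qed

lemma uniform_limit_convolution_on_cube:
  fixes h :: "real^'n \<Rightarrow> complex" and L :: "nat \<Rightarrow> real^'n \<Rightarrow> real"
  assumes h: "continuous_on UNIV h"
    and L_cont: "\<And>k. continuous_on UNIV (L k)"
    and L_nonneg: "\<And>k z. z \<in> cube (2*r) \<Longrightarrow> 0 \<le> L k z"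
    and L_integral: "\<And>k. integral (cube (2*r)) (L k) = 1"
    and L_concentrates: "\<And>\<delta>. 0 < \<delta> \<Longrightarrow> uniform_limit {z \<in> cube (2*r). \<delta> \<le> norm z} L (\<lambda>_. 0) sequentially"
  shows "uniform_limit (cube r) (\<lambda>k. convolution_on (cube (2*r)) (L k) h) h sequentially"
proof (rule uniform_limitI)
  fix e :: real assume e: "0 < e"
  have T: "compact (cube (3*r) :: (real^'n) set)"
    unfolding cube_def by simp
  obtain \<delta> where \<delta>: "0 < \<delta>"
    and near: "\<And>u v. u \<in> cube (3*r) \<Longrightarrow> v \<in> cube (3*r) \<Longrightarrow> dist v u < \<delta> \<Longrightarrow> dist (h v) (h u) < e/2"
    using compact_uniformly_continuous[OF continuous_on_subset[OF h subset_UNIV] T] e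
    unfolding uniformly_continuous_on_def by (meson half_gt_zero)
  obtain M where M: "0 < M" "\<And>u. u \<in> cube (3*r) \<Longrightarrow> norm (h u) \<le> M"
    using compact_imp_bounded[OF compact_continuous_image[OF continuous_on_subset[OF h subset_UNIV] T]]
    unfolding bounded_pos by auto
  define C where "C = Henstock_Kurzweil_Integration.content (cube (2*r) :: (real^'n) set)"
  define \<eta> where "\<eta> = e / (4 * (M * C + 1))"
  have MC: "0 \<le> M * C" using M by (simp add: C_def)
  have \<eta>: "0 < \<eta>" using e MC by (simp add: \<eta>_def)
  have "\<eta> * (2 * M) * C = e/2 * (M * C / (M * C + 1))"
    using MC by (simp add: \<eta>_def field_simps)
  also have "\<dots> < e/2"
    using mult_strict_left_mono[of "M * C / (M * C + 1)" 1 "e/2"] e MC by simp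
  finally have small: "e/2 + \<eta> * (2 * M) * C < e"
    by simp
  have "\<forall>\<^sub>F k in sequentially. \<forall>z\<in>{z \<in> cube (2*r). \<delta> \<le> norm z}. dist (L k z) 0 < \<eta>"
    by (rule uniform_limitD[OF L_concentrates[OF \<delta>] \<eta>])
  then show "\<forall>\<^sub>F k in sequentially. \<forall>x\<in>cube r. dist (convolution_on (cube (2*r)) (L k) h x) (h x) < e"
  proof eventually_elim
    case (elim k)
    have "norm (convolution_on (cube (2*r)) (L k) h x - h x) \<le> e/2 + \<eta> * (2 * M) * C" if "x \<in> cube r" for x
      unfolding C_def using elim e \<eta>
      by (intro norm_convolution_on_cube_minus_le[OF L_cont L_nonneg L_integral h that near M(2)]) auto
    then show ?case
      using small by (auto simp: dist_norm intro: le_less_trans)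
  qed
qed

section \<open>The Landau kernel\<close>

definition landau_kernel :: "real \<Rightarrow> nat \<Rightarrow> real^'n \<Rightarrow> real" where
  "landau_kernel R k z = (1 - norm z ^ 2 / R) ^ k"

definition normalized_landau_kernel :: "real \<Rightarrow> real \<Rightarrow> nat \<Rightarrow> real^'n \<Rightarrow> real" where
  "normalized_landau_kernel r R k z =
    landau_kernel R k z / integral (cube (2*r)) (landau_kernel R k :: real^'n \<Rightarrow> real)"

lemma continuous_on_landau_kernel: "continuous_on S (landau_kernel R k)"
  unfolding landau_kernel_def[abs_def] divide_inverse by (intro continuous_intros)

lemma continuous_on_normalized_landau_kernel: "continuous_on S (normalized_landau_kernel r R k)"
  unfolding normalized_landau_kernel_def[abs_def] divide_inverse
  by (intro continuous_intros continuous_on_landau_kernel)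

context
  fixes r R :: real
  assumes r: "0 < r" and R: "4 * r^2 * real CARD('n::finite) < R"
begin

lemma landau_radius: "4 * r^2 < R"
proof -
  have "4 * r^2 * 1 \<le> 4 * r^2 * real CARD('n)"
    by (intro mult_left_mono) (simp_all add: Suc_leI)
  then show ?thesis using R by simp
qed

lemma landau_radius_pos: "0 < R"
  using landau_radius zero_le_power2[of r] by linarith

lemma landau_radius_gt_square:
  assumes "0 \<le> \<delta>" "\<delta> \<le> 2 * r"
  shows "\<delta>^2 < R"
proof -
  have "\<delta>^2 \<le> (2*r)^2"
    using assms by (intro power_mono)
  also have "\<dots> = 4 * r^2"
    by (simp add: power_mult_distrib)
  also have "\<dots> < R"
    by (rule landau_radius)
  finally show ?thesis .
qed

lemma landau_base_nonneg: "z \<in> cube (2*r) \<Longrightarrow> 0 \<le> 1 - norm (z::real^'n) ^ 2 / R"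
  using power2_norm_le_cube[of z "2*r"] R landau_radius_pos by (simp add: power2_eq_square mult_ac)

lemma landau_kernel_nonneg: "z \<in> cube (2*r) \<Longrightarrow> 0 \<le> landau_kernel R k (z::real^'n)"
  unfolding landau_kernel_def using landau_base_nonneg by simp

lemma landau_kernel_le:
  assumes "z \<in> cube (2*r)" "0 \<le> \<delta>" "\<delta> \<le> norm (z::real^'n)"
  shows "landau_kernel R k z \<le> (1 - \<delta>^2 / R) ^ k"
  unfolding landau_kernel_def
proof (rule power_mono)
  have "\<delta>^2 \<le> norm z ^ 2" using assms by (simp add: power_mono)
  then show "1 - norm z ^ 2 / R \<le> 1 - \<delta>^2 / R"
    using landau_radius_pos by (simp add: divide_right_mono)
qed (rule landau_base_nonneg[OF assms(1)])

lemma landau_kernel_ge: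
  assumes "z \<in> cube s" "real CARD('n) * s^2 \<le> \<delta>^2 / 2" "\<delta>^2 / 2 < R"
  shows "(1 - \<delta>^2 / (2 * R)) ^ k \<le> landau_kernel R k (z::real^'n)"
  unfolding landau_kernel_def
proof (rule power_mono)
  have "norm z ^ 2 \<le> \<delta>^2 / 2" using power2_norm_le_cube[OF assms(1)] assms(2) by linarith
  then have "norm z ^ 2 / R \<le> (\<delta>^2 / 2) / R"
    using landau_radius_pos by (intro divide_right_mono) auto
  then show "1 - \<delta>^2 / (2 * R) \<le> 1 - norm z ^ 2 / R"
    by (simp add: mult.commute)
  show "0 \<le> 1 - \<delta>^2 / (2 * R)"
    using assms(3) landau_radius_pos by simp
qed

text \<open>The second factor is the volume of the cube of half-side \<open>\<delta> / sqrt (2 n)\<close>, on which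
  \<open>\<bar>z\<bar>\<^sup>2 \<le> \<delta>\<^sup>2 / 2\<close>.\<close>

lemma integral_landau_kernel_ge:
  assumes "0 < \<delta>" "\<delta> \<le> 2 * r"
  shows "(1 - \<delta>^2 / (2 * R)) ^ k * (2 * (\<delta> / sqrt (2 * real CARD('n)))) ^ CARD('n)
    \<le> integral (cube (2*r)) (landau_kernel R k :: real^'n \<Rightarrow> real)"
proof -
  define s where "s = \<delta> / sqrt (2 * real CARD('n))"
  have n: "1 \<le> real CARD('n)"
    by (simp add: Suc_leI)
  have "(1::real)^2 \<le> 2 * real CARD('n)"
    using n unfolding power_one by linarith
  then have "1 \<le> sqrt (2 * real CARD('n))"
    by (rule real_le_rsqrt)
  then have "s \<le> \<delta>"
    using divide_left_mono[of 1 "sqrt (2 * real CARD('n))" \<delta>] assms by (simp add: s_def)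
  moreover have "0 \<le> s" "real CARD('n) * s^2 = \<delta>^2 / 2"
    using assms by (simp_all add: s_def power_divide)
  ultimately have s: "0 \<le> s" "s \<le> \<delta>" "real CARD('n) * s^2 = \<delta>^2 / 2"
    by simp_all
  have \<delta>R: "\<delta>^2 / 2 < R"
    using landau_radius_gt_square[of \<delta>] assms zero_le_power2[of \<delta>] by linarith
  have cube_sub: "cube s \<subseteq> (cube (2*r) :: (real^'n) set)"
    using s(2) assms(2) unfolding subset_iff mem_cube by (meson order_trans)
  have int: "landau_kernel R k integrable_on cube t" for t
    unfolding cube_def by (intro integrable_continuous continuous_on_landau_kernel)
  have "(1 - \<delta>^2 / (2 * R)) ^ k * (2 * s) ^ CARD('n) = integral (cube s) (\<lambda>z::real^'n. (1 - \<delta>^2 / (2 * R)) ^ k)"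
    using content_cube[OF s(1), where 'n = 'n] by (simp add: cube_def)
  also have "\<dots> \<le> integral (cube s) (landau_kernel R k :: real^'n \<Rightarrow> real)"
    using landau_kernel_ge[OF _ _ \<delta>R] s(3) int
    by (intro integral_le) (auto simp: cube_def)
  also have "\<dots> \<le> integral (cube (2*r)) (landau_kernel R k :: real^'n \<Rightarrow> real)"
    using landau_kernel_nonneg by (intro integral_subset_le[OF cube_sub int int]) auto
  finally show ?thesis
    by (simp add: s_def)
qed

lemma integral_landau_kernel_pos: "0 < integral (cube (2*r)) (landau_kernel R k :: real^'n \<Rightarrow> real)"
proof -
  have "(2*r)^2 / (2 * R) < 1"
    using landau_radius_gt_square[of "2*r"] r landau_radius_pos by simp
  then have "0 < (1 - (2*r)^2 / (2 * R)) ^ k * (2 * (2 * r / sqrt (2 * real CARD('n)))) ^ CARD('n)"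
    using r by (intro mult_pos_pos zero_less_power) simp_all
  then show ?thesis
    using integral_landau_kernel_ge[of "2*r" k] r by linarith
qed

lemma normalized_landau_kernel_le:
  assumes \<delta>: "0 < \<delta>" "\<delta> \<le> 2 * r" and z: "z \<in> cube (2*r)" "\<delta> \<le> norm (z :: real^'n)"
  shows "\<bar>normalized_landau_kernel r R k z\<bar> \<le>
    ((1 - \<delta>^2 / R) / (1 - \<delta>^2 / (2 * R))) ^ k / (2 * (\<delta> / sqrt (2 * real CARD('n)))) ^ CARD('n)"
proof -
  define I where "I = integral (cube (2*r)) (landau_kernel R k :: real^'n \<Rightarrow> real)"
  have "\<delta>^2 < R"
    using landau_radius_gt_square \<delta> by simp
  then have "0 < 1 - \<delta>^2 / R" "0 < 1 - \<delta>^2 / (2 * R)"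
    using landau_radius_pos by (simp_all add: field_simps)
  moreover have I: "(1 - \<delta>^2 / (2 * R)) ^ k * (2 * (\<delta> / sqrt (2 * real CARD('n)))) ^ CARD('n) \<le> I" "0 < I"
    using integral_landau_kernel_ge[OF \<delta>, of k] integral_landau_kernel_pos[of k] by (simp_all add: I_def)
  moreover have "landau_kernel R k z \<le> (1 - \<delta>^2 / R) ^ k"
    using landau_kernel_le[OF z(1) _ z(2)] \<delta> by simp
  ultimately have "landau_kernel R k z / I \<le>
      (1 - \<delta>^2 / R) ^ k / ((1 - \<delta>^2 / (2 * R)) ^ k * (2 * (\<delta> / sqrt (2 * real CARD('n)))) ^ CARD('n))"
    using \<delta> by (intro frac_le) auto
  then show ?thesis
    using landau_kernel_nonneg[OF z(1), of k] I(2)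
    by (simp add: normalized_landau_kernel_def I_def power_divide)
qed

lemma normalized_landau_kernel_concentrates:
  assumes "0 < \<delta>"
  shows "uniform_limit {z \<in> cube (2*r). \<delta> \<le> norm z} (normalized_landau_kernel r R :: nat \<Rightarrow> real^'n \<Rightarrow> real)
    (\<lambda>_. 0) sequentially"
proof -
  define \<delta>' where "\<delta>' = min \<delta> (2*r)"
  define q where "q = (1 - \<delta>'^2 / R) / (1 - \<delta>'^2 / (2 * R))"
  define Q where "Q = (2 * (\<delta>' / sqrt (2 * real CARD('n)))) ^ CARD('n)"
  have \<delta>': "0 < \<delta>'" "\<delta>' \<le> 2 * r"
    using assms r by (simp_all add: \<delta>'_def)
  then have "\<delta>'^2 < R"
    using landau_radius_gt_square by simp
  then have "0 < q" "q < 1"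
    using \<delta>' landau_radius_pos by (simp_all add: q_def field_simps)
  then have "(\<lambda>k. q ^ k / Q) \<longlonglongrightarrow> 0"
    by (intro tendsto_divide_zero LIMSEQ_power_zero) simp
  then have "uniform_limit {z \<in> cube (2*r). \<delta>' \<le> norm z} (normalized_landau_kernel r R :: nat \<Rightarrow> real^'n \<Rightarrow> real)
      (\<lambda>_. 0) sequentially"
    using normalized_landau_kernel_le[OF \<delta>']
    by (intro uniform_limitI) (auto elim!: eventually_mono[OF order_tendstoD(2)] intro: le_less_trans
        simp: q_def Q_def)
  then show ?thesis
    by (rule uniform_limit_on_subset) (auto simp: \<delta>'_def)
qed

lemma uniform_limit_landau_convolution:
  fixes h :: "real^'n \<Rightarrow> complex"
  assumes "continuous_on UNIV h"
  shows "uniform_limit (cube r) (\<lambda>k. convolution_on (cube (2*r)) (normalized_landau_kernel r R k) h) h sequentially"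
proof (rule uniform_limit_convolution_on_cube[OF assms continuous_on_normalized_landau_kernel])
  show "0 \<le> normalized_landau_kernel r R k z" if "z \<in> cube (2*r)" for k and z :: "real^'n"
    using landau_kernel_nonneg[OF that] integral_landau_kernel_pos[of k]
    by (simp add: normalized_landau_kernel_def)
  show "integral (cube (2*r)) (normalized_landau_kernel r R k :: real^'n \<Rightarrow> real) = 1" for k
    using integral_landau_kernel_pos[of k] by (simp add: normalized_landau_kernel_def[abs_def])
qed (rule normalized_landau_kernel_concentrates)

end

lemma polynomial_landau_convolution:
  fixes \<phi> :: "real^'n \<Rightarrow> complex"
  assumes "continuous_on UNIV \<phi>"
  shows "(\<lambda>x. integral (cube r) (\<lambda>y. complex_of_real (normalized_landau_kernel r R k (x - y)) * \<phi> y))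
    \<in> polynomials"
proof -
  have "(\<lambda>x y. complex_of_real (normalized_landau_kernel r R k (x - y))) \<in> (separable_kernels :: (real^'n \<Rightarrow> _) set)"
    using landau_kernel_separable[of "1 / integral (cube (2*r)) (landau_kernel R k :: real^'n \<Rightarrow> real)" R k]
    by (simp add: normalized_landau_kernel_def landau_kernel_def)
  from integral_separable_kernel_polynomial[OF this assms]
  show ?thesis
    unfolding cube_def .
qed

lemma convolution_on_cube_eq_integral:
  fixes \<phi> :: "real^'n \<Rightarrow> complex" and L :: "real^'n \<Rightarrow> real"
  assumes \<phi>: "continuous_on UNIV \<phi>" "\<And>y. y \<notin> cube r \<Longrightarrow> \<phi> y = 0"
    and L: "continuous_on UNIV L" and x: "x \<in> cube r"
  shows "convolution_on (cube (2*r)) L \<phi> x = integral (cube r) (\<lambda>y. complex_of_real (L (x - y)) * \<phi> y)"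
  unfolding cube_def
proof (rule convolution_on_reflect[OF \<phi>(1) _ L])
  show "\<phi> y = 0" if "y \<notin> cbox (- (\<chi> j. r)) (\<chi> j. r)" for y
    using \<phi>(2) that by (simp add: cube_def)
  show "x - y \<in> cbox (- (\<chi> j. 2 * r)) (\<chi> j. 2 * r)" if "y \<in> cbox (- (\<chi> j. r)) (\<chi> j. r)" for y
  proof -
    have "y \<in> cube r"
      using that by (simp add: cube_def)
    from diff_mem_cube[OF x this] show ?thesis
      unfolding cube_def[symmetric] mult_2 .
  qed
qed

lemma compact_subset_box:
  fixes S :: "(real^'n) set"
  assumes "compact S"
  obtains r where "0 < r" "S \<subseteq> box (- (\<chi> j. r)) (\<chi> j. r)"
proof -
  obtain B where B: "\<And>x. x \<in> S \<Longrightarrow> norm x \<le> B"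
    using compact_imp_bounded[OF assms] unfolding bounded_iff by blast
  have "- (\<bar>B\<bar> + 1) < x $ j \<and> x $ j < \<bar>B\<bar> + 1" if "x \<in> S" for x j
    using B[OF that] component_le_norm_cart[of x j] by (simp add: abs_le_iff)
  then have "S \<subseteq> box (- (\<chi> j. \<bar>B\<bar> + 1)) (\<chi> j. \<bar>B\<bar> + 1)"
    unfolding subset_iff mem_box_cart by simp
  then show ?thesis
    by (rule that[rotated]) simp
qed

lemma test_fun_polynomial_approx:
  fixes \<phi> :: "real^'n \<Rightarrow> complex"
  assumes \<phi>: "test_fun \<phi>" and K: "compact K"
  obtains p where "\<And>k. p k \<in> polynomials"
    and "\<And>is. set is \<subseteq> Basis \<Longrightarrow> uniform_limit K (\<lambda>k. pderivs is (p k)) (pderivs is \<phi>) sequentially"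
proof -
  obtain r where r: "0 < r" and supp_U: "tsupport \<phi> \<union> K \<subseteq> box (- (\<chi> j. r)) (\<chi> j. r)"
    using compact_subset_box[OF compact_Un[OF test_fun_compact_tsupport[OF \<phi>] K]] by blast
  define R where "R = 4 * r^2 * real CARD('n) + 1"
  define N where "N = (normalized_landau_kernel r R :: nat \<Rightarrow> real^'n \<Rightarrow> real)"
  define p where "p k x = integral (cube r) (\<lambda>y. complex_of_real (N k (x - y)) * \<phi> y)" for k x
  have R: "4 * r^2 * real CARD('n) < R"
    by (simp add: R_def)
  have U: "open (box (- (\<chi> j. r)) (\<chi> j. r))" "box (- (\<chi> j. r)) (\<chi> j. r) \<subseteq> cube r"
    unfolding cube_def by (simp_all add: open_box box_subset_cbox)
  have \<phi>_cont: "continuous_on UNIV \<phi>"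
    by (rule smooth_continuous_on[OF test_fun_smooth[OF \<phi>]])
  have \<phi>_cube: "\<phi> y = 0" if "y \<notin> cube r" for y
    using not_in_tsupport[of y \<phi>] that supp_U U(2) by blast
  have N_cont: "continuous_on UNIV (N k)" for k
    unfolding N_def by (rule continuous_on_normalized_landau_kernel)
  have "p k \<in> polynomials" for k
    unfolding p_def[abs_def] N_def by (rule polynomial_landau_convolution[OF \<phi>_cont])
  moreover have "uniform_limit K (\<lambda>k. pderivs is (p k)) (pderivs is \<phi>) sequentially"
    if "is": "set is \<subseteq> Basis" for "is"
  proof -
    have "pderivs is (p k) x = convolution_on (cube (2*r)) (N k) (pderivs is \<phi>) x"
      if "x \<in> box (- (\<chi> j. r)) (\<chi> j. r)" for k x
    proof -
      have "pderivs is (p k) x = pderivs is (convolution_on (cube (2*r)) (N k) \<phi>) x"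
        using convolution_on_cube_eq_integral[OF \<phi>_cont \<phi>_cube N_cont] U that
        by (intro pderivs_local[OF U(1)]) (auto simp: p_def)
      then show ?thesis
        using pderivs_convolution_on[OF N_cont test_fun_smooth[OF \<phi>] "is"] by (simp add: cube_def)
    qed
    moreover have "uniform_limit (cube r) (\<lambda>k. convolution_on (cube (2*r)) (N k) (pderivs is \<phi>))
        (pderivs is \<phi>) sequentially"
      unfolding N_def using r R
      by (intro uniform_limit_landau_convolution smooth_continuous_on smooth_pderivs test_fun_smooth \<phi> "is")
    then have "uniform_limit K (\<lambda>k. convolution_on (cube (2*r)) (N k) (pderivs is \<phi>))
        (pderivs is \<phi>) sequentially"
      by (rule uniform_limit_on_subset) (use supp_U U in auto)
    ultimately show ?thesis
      using supp_U by (subst uniform_limit_cong') auto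
  qed
  ultimately show ?thesis
    using that by blast
qed

lemma test_tendsto0I:
  fixes \<phi>s :: "nat \<Rightarrow> 'a::euclidean_space \<Rightarrow> complex"
  assumes "\<And>k. test_fun (\<phi>s k)" "compact K" "\<And>k. {x. \<phi>s k x \<noteq> 0} \<subseteq> K"
    and "\<And>is. set is \<subseteq> Basis \<Longrightarrow> uniform_limit UNIV (\<lambda>k. pderivs is (\<phi>s k)) (\<lambda>_. 0) sequentially"
  shows "test_tendsto0 \<phi>s"
  unfolding test_tendsto0_def
proof (intro conjI allI impI)
  show "test_fun (\<phi>s k)" for k
    by (rule assms(1))
  show "\<exists>K. compact K \<and> (\<forall>k. {x. \<phi>s k x \<noteq> 0} \<subseteq> K)"
    using assms(2,3) by blast
  fix "is" :: "'a list" and e :: real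
  assume "set is \<subseteq> Basis" "0 < e"
  from uniform_limitD[OF assms(4)[OF this(1)] this(2)]
  show "\<forall>\<^sub>F k in sequentially. \<forall>x. norm (pderivs is (\<phi>s k) x) < e"
    by (simp add: dist_norm)
qed

lemma hyperop_apply_tendsto_0:
  fixes B :: "('a::euclidean_space \<Rightarrow> complex) \<Rightarrow> 'x::complex_banach \<Rightarrow>\<^sub>L 'x"
  assumes "hyperop B" "test_tendsto0 \<phi>s"
  shows "(\<lambda>k. B (\<phi>s k) w) \<longlonglongrightarrow> 0"
proof (rule Lim_null_comparison)
  show "\<forall>\<^sub>F k in sequentially. norm (B (\<phi>s k) w) \<le> norm (B (\<phi>s k)) * norm w"
    by (intro always_eventually allI norm_blinfun)
  show "(\<lambda>k. norm (B (\<phi>s k)) * norm w) \<longlonglongrightarrow> 0"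
    using tendsto_mult_left_zero[OF hyperop_tendsto_0[OF assms]] .
qed

lemma test_tendsto0_cutoff:
  fixes \<phi> \<theta> :: "'a::euclidean_space \<Rightarrow> complex"
  assumes \<phi>: "test_fun \<phi>" and \<theta>: "test_fun \<theta>" and p: "\<And>k. smooth (p k)"
    and lim: "\<And>is. set is \<subseteq> Basis \<Longrightarrow>
      uniform_limit (tsupport \<theta>) (\<lambda>k. pderivs is (p k)) (pderivs is \<phi>) sequentially"
  shows "test_tendsto0 (\<lambda>k t. (p k t - \<phi> t) * \<theta> t)"
proof (rule test_tendsto0I[OF _ test_fun_compact_tsupport[OF \<theta>]])
  have p_\<phi>: "smooth (\<lambda>t. p k t - \<phi> t)" for k
    using smooth_diff[OF p test_fun_smooth[OF \<phi>]] .
  then show "test_fun (\<lambda>t. (p k t - \<phi> t) * \<theta> t)" for k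
    by (rule test_fun_mult[OF _ \<theta>])
  show "{x. (p k x - \<phi> x) * \<theta> x \<noteq> 0} \<subseteq> tsupport \<theta>" for k
    using closure_subset by (fastforce simp: tsupport_def)
  fix "is" :: "'a list" assume "is": "set is \<subseteq> Basis"
  have "uniform_limit (tsupport \<theta>) (\<lambda>k. pderivs js (\<lambda>t. p k t - \<phi> t)) (pderivs js (\<lambda>_. 0)) sequentially"
    if "set js \<subseteq> Basis" for js
    using uniform_limit_minus[OF lim[OF that] uniform_limit_const[where c = "pderivs js \<phi>"]] that
    by (simp add: pderivs_diff[OF p test_fun_smooth[OF \<phi>]] pderivs_zero)
  from uniform_limit_pderivs_mult[OF test_fun_compact_tsupport[OF \<theta>] "is" p_\<phi> smooth_const this
      test_fun_smooth[OF \<theta>] order.refl]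
  show "uniform_limit UNIV (\<lambda>k. pderivs is (\<lambda>t. (p k t - \<phi> t) * \<theta> t)) (\<lambda>_. 0) sequentially"
    by (simp add: pderivs_zero)
qed

lemma hyperop_apply_tendsto:
  fixes B :: "('a::euclidean_space \<Rightarrow> complex) \<Rightarrow> 'x::complex_banach \<Rightarrow>\<^sub>L 'x"
  assumes B: "hyperop B" and \<phi>: "test_fun \<phi>" and \<theta>: "test_fun \<theta>" and p: "\<And>k. smooth (p k)"
    and lim: "\<And>is. set is \<subseteq> Basis \<Longrightarrow>
      uniform_limit (tsupport \<theta>) (\<lambda>k. pderivs is (p k)) (pderivs is \<phi>) sequentially"
  shows "(\<lambda>k. B (\<lambda>t. p k t * \<theta> t) w) \<longlonglongrightarrow> B \<phi> (B \<theta> w)"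
proof -
  define h where "h k t = (p k t - \<phi> t) * \<theta> t" for k t
  have "(\<lambda>k. B (\<lambda>t. \<phi> t * \<theta> t) w + B (h k) w) \<longlonglongrightarrow> B (\<lambda>t. \<phi> t * \<theta> t) w + 0"
    unfolding h_def[abs_def]
    by (intro tendsto_add tendsto_const hyperop_apply_tendsto_0[OF B] test_tendsto0_cutoff[OF \<phi> \<theta> p lim])
  moreover have "B (\<lambda>t. p k t * \<theta> t) = B (\<lambda>t. \<phi> t * \<theta> t) + B (h k)" for k
  proof -
    have "(\<lambda>t. p k t * \<theta> t) = (\<lambda>t. \<phi> t * \<theta> t + h k t)"
      by (auto simp: h_def algebra_simps)
    then show ?thesis
      using hyperop_add[OF B test_fun_mult[OF test_fun_smooth[OF \<phi>] \<theta>], of "h k"]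
        test_fun_mult[OF smooth_diff[OF p test_fun_smooth[OF \<phi>]] \<theta>] by (simp add: h_def[abs_def])
  qed
  ultimately show ?thesis
    using hyperop_mult[OF B \<phi> \<theta>] by (simp add: plus_blinfun.rep_eq)
qed

context common_core
begin

lemma hyperops_agree_on_core:
  assumes \<phi>: "test_fun \<phi>" and x: "x \<in> D"
  shows "A \<phi> x = A' \<phi> x"
proof -
  obtain \<psi> y \<psi>' y' where \<psi>: "test_fun \<psi>" "test_fun \<psi>'" and xy: "x = A \<psi> y" "x = A' \<psi>' y'"
    using core_subset x unfolding domA_def by blast
  obtain p where p: "\<And>k. p k \<in> polynomials"
    and lim: "\<And>is. set is \<subseteq> Basis \<Longrightarrow>
      uniform_limit (tsupport \<psi> \<union> tsupport \<psi>') (\<lambda>k. pderivs is (p k)) (pderivs is \<phi>) sequentially"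
    using test_fun_polynomial_approx[OF \<phi> compact_Un[OF test_fun_compact_tsupport[OF \<psi>(1)]
        test_fun_compact_tsupport[OF \<psi>(2)]]] by blast
  have p_smooth: "smooth (p k)" for k
    using polynomials_smooth[OF p] .
  have lim\<psi>: "uniform_limit (tsupport \<psi>) (\<lambda>k. pderivs is (p k)) (pderivs is \<phi>) sequentially"
    and lim\<psi>': "uniform_limit (tsupport \<psi>') (\<lambda>k. pderivs is (p k)) (pderivs is \<phi>) sequentially"
    if "set is \<subseteq> Basis" for "is"
    using lim[OF that] by (auto elim: uniform_limit_on_subset)
  have "(\<lambda>k. A (\<lambda>t. p k t * \<psi> t) y) \<longlonglongrightarrow> A \<phi> (A \<psi> y)"
    by (rule hyperop_apply_tendsto[OF hyperop_A \<phi> \<psi>(1) p_smooth lim\<psi>])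
  moreover have "(\<lambda>k. A' (\<lambda>t. p k t * \<psi>' t) y') \<longlonglongrightarrow> A' \<phi> (A' \<psi>' y')"
    by (rule hyperop_apply_tendsto[OF hyperop_A' \<phi> \<psi>(2) p_smooth lim\<psi>'])
  moreover have "A (\<lambda>t. p k t * \<psi> t) y = A' (\<lambda>t. p k t * \<psi>' t) y'" for k
    using intertwiningD(1)[OF polynomial_intertwining[OF p] \<psi>] xy x by simp
  ultimately have "A \<phi> (A \<psi> y) = A' \<phi> (A' \<psi>' y')"
    using LIMSEQ_unique by simp
  then show ?thesis
    unfolding xy(1)[symmetric] xy(2)[symmetric] .
qed

end

theorem proposition4p2:
  fixes A A' :: "(real^'n \<Rightarrow> complex) \<Rightarrow> 'x::complex_banach \<Rightarrow>\<^sub>L 'x"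
    and D :: "'x set"
  assumes "hyperop A" and "hyperop A'"
    and "closure (domA A \<inter> domA A') = UNIV"
    and "csubspace D" and "closure D = UNIV" and "D \<subseteq> domA A \<inter> domA A'"
    and "\<And>j x. x \<in> D \<Longrightarrow> coord_op A j x = coord_op A' j x"
    and "\<And>j x. x \<in> D \<Longrightarrow> coord_op A j x \<in> D"
  shows "\<forall>\<phi>. test_fun \<phi> \<longrightarrow> A \<phi> = A' \<phi>"
proof (intro allI impI)
  interpret common_core A A' D
    using assms by unfold_locales
  fix \<phi> :: "real^'n \<Rightarrow> complex" assume \<phi>: "test_fun \<phi>"
  have "closed {x. A \<phi> x = A' \<phi> x}"
    by (intro closed_Collect_eq continuous_intros)
  then have "closure D \<subseteq> {x. A \<phi> x = A' \<phi> x}"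
    using hyperops_agree_on_core[OF \<phi>] by (intro closure_minimal) auto
  then show "A \<phi> = A' \<phi>"
    using \<open>closure D = UNIV\<close> by (intro blinfun_eqI) auto
qed

end
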